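(* Let $f^i_m:\mathbb{R}^d\to\mathbb{R}$ ($m\in[M]$, $i\in[n]$) be differentiable and $L$-smooth, with $f_m=\frac1n\sum_i f^i_m$, $f=\frac1M\sum_m f_m$, and suppose $f_*=\inf f$, $f_{*,m}=\inf f_m$, $f^i_{*,m}=\inf f^i_m$ are all finite. Fix $x_t\in\mathbb{R}^d$ and $\gamma\le\frac{1}{2Ln}$. For each $m\in[M]$ let $\pi_m$ be a uniformly random permutation of $[n]$ and define $x^0_{t,m}=x_t$, $x^{i+1}_{t,m}=x^i_{t,m}-\gamma\nabla f_m^{\pi_m^i}(x^i_{t,m})$ for $i=0,\dots,n-1$. Then $$\frac{1}{Mn}\sum_{m=1}^M\sum_{i=0}^{n-1}\mathbb{E}\|x_t-x^i_{t,m}\|^2\le 4\gamma^2n^2L\big(f(x_t)-f_*\big)+2\gamma^2n^2L\Delta_*+2\gamma^2nL\frac1M\sum_{m=1}^M\Delta_{*,m},$$ where the expectation is over the permutations.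
   Context: $[k]=\{1,\dots,k\}$. $L$-smooth: $\|\nabla h(x)-\nabla h(y)\|\le L\|x-y\|$ for all $x,y$. $\Delta_*=f_*-\frac1M\sum_{m=1}^M f_{*,m}$ and $\Delta_{*,m}=f_*-\frac1n\sum_{i=1}^n f^i_{*,m}$. Permutations $\pi_m=(\pi_m^0,\dots,\pi_m^{n-1})$ are indexed from $0$. *)

theory Defs
  imports "HOL-Analysis.Analysis" "HOL-Combinatorics.Permutations"
begin

text \<open>G m j is the gradient of f^j_m.\<close>
primrec rr_iter :: "(nat \<Rightarrow> nat \<Rightarrow> 'a::real_normed_vector \<Rightarrow> 'a) \<Rightarrow> real \<Rightarrow> nat \<Rightarrow> (nat \<Rightarrow> nat) \<Rightarrow> 'a \<Rightarrow> nat \<Rightarrow> 'a"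
  where
    "rr_iter G \<gamma> m p x 0 = x"
  | "rr_iter G \<gamma> m p x (Suc i) = rr_iter G \<gamma> m p x i - \<gamma> *\<^sub>R G m (p i) (rr_iter G \<gamma> m p x i)"

definition perm_expect :: "nat \<Rightarrow> ((nat \<Rightarrow> nat) \<Rightarrow> real) \<Rightarrow> real" where
  "perm_expect n X = (\<Sum>p\<in>{p. p permutes {..<n}}. X p) / real (card {p. p permutes {..<n}})"

end

theory Submission
  imports Defs
begin

text \<open>Within an epoch, x - x^i is \<gamma> times the sum of the first i shuffled gradients taken at the
  iterates. Replacing them by the gradients at x costs, by smoothness, at most (\<gamma> L n)^2 \<le> 1/4
  times the total deviation, which is absorbed. What is left is the second moment of the partial
  sums of a sample drawn without replacement, computed exactly by the symmetry of a uniform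
  permutation. Finally, for an L-smooth function h bounded below, the squared gradient norm at x is
  at most 2 L (h x - inf h); applied to every f_m and every f^i_m and averaged over the clients,
  this yields the three gaps of the bound.\<close>

lemma lipschitz_gradient_quadratic_upper_bound:
  fixes h :: "'a::real_inner \<Rightarrow> real" and g :: "'a \<Rightarrow> 'a"
  assumes deriv: "\<And>y. (h has_derivative (\<lambda>k. g y \<bullet> k)) (at y)"
    and lipschitz: "\<And>y z. norm (g y - g z) \<le> L * norm (y - z)"
  shows "h (y + v) \<le> h y + g y \<bullet> v + L / 2 * (norm v)\<^sup>2"
proof -
  define \<phi> where "\<phi> t = h (y + t *\<^sub>R v) - t * (g y \<bullet> v) - L / 2 * t\<^sup>2 * (norm v)\<^sup>2" for t
  have h_line: "((\<lambda>t. h (y + t *\<^sub>R v)) has_real_derivative g (y + t *\<^sub>R v) \<bullet> v) (at t)" for t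
  proof -
    have "((\<lambda>t. y + t *\<^sub>R v) has_derivative (\<lambda>s. s *\<^sub>R v)) (at t)"
      by (auto intro!: derivative_eq_intros)
    from has_derivative_compose[OF this deriv] show ?thesis
      by (simp add: has_field_derivative_def mult_commute_abs)
  qed
  have \<phi>_deriv: "(\<phi> has_real_derivative (g (y + t *\<^sub>R v) - g y) \<bullet> v - L * t * (norm v)\<^sup>2) (at t)" for t
    unfolding \<phi>_def
    by (rule derivative_eq_intros h_line | simp)+ (simp add: algebra_simps inner_diff_left)
  have "\<phi> 1 \<le> \<phi> 0"
  proof (rule DERIV_nonpos_imp_nonincreasing[of 0 1])
    fix t :: real assume t: "0 \<le> t" "t \<le> 1"
    have "(g (y + t *\<^sub>R v) - g y) \<bullet> v \<le> norm (g (y + t *\<^sub>R v) - g y) * norm v"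
      by (rule norm_cauchy_schwarz)
    also have "\<dots> \<le> L * norm (t *\<^sub>R v) * norm v"
      using lipschitz[of "y + t *\<^sub>R v" y] by (simp add: mult_right_mono)
    also have "\<dots> = L * t * (norm v)\<^sup>2"
      using t by (simp add: power2_eq_square)
    finally show "\<exists>d. (\<phi> has_real_derivative d) (at t) \<and> d \<le> 0"
      using \<phi>_deriv[of t] by (intro exI[of _ "_ - _"] conjI) auto
  qed simp
  then show ?thesis
    unfolding \<phi>_def by simp
qed

lemma quadratic_upper_bound_imp_norm_sq_le:
  fixes \<phi> :: "'a::real_inner \<Rightarrow> real"
  assumes upper: "\<And>v. \<phi> (x + v) \<le> \<phi> x + g \<bullet> v + L / 2 * (norm v)\<^sup>2"
    and bdd: "bdd_below (range \<phi>)" and L: "L > 0"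
  shows "(norm g)\<^sup>2 \<le> 2 * L * (\<phi> x - (INF y. \<phi> y))"
proof -
  define v where "v = (- 1 / L) *\<^sub>R g"
  have "(INF y. \<phi> y) \<le> \<phi> (x + v)"
    by (rule cINF_lower[OF bdd]) simp
  also have "\<dots> \<le> \<phi> x + g \<bullet> v + L / 2 * (norm v)\<^sup>2"
    by (rule upper)
  also have "\<dots> = \<phi> x - (norm g)\<^sup>2 / (2 * L)"
    unfolding v_def using L by (simp add: power2_eq_square field_simps flip: power2_norm_eq_inner)
  finally show ?thesis
    using L by (simp add: field_simps)
qed

lemma sum_permutes_eval_eq:
  fixes h :: "nat \<Rightarrow> 'b::comm_monoid_add"
  assumes "j < n"
  shows "(\<Sum>p | p permutes {..<n}. h (p j)) = (\<Sum>p | p permutes {..<n}. h (p 0))"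
proof -
  have "Transposition.transpose 0 j permutes {..<n}"
    using assms by (intro permutes_swap_id) auto
  from sum_permutations_compose_right[OF this, of "\<lambda>p. h (p 0)"] show ?thesis
    by simp
qed

lemma sum_permutes_eval2_eq:
  fixes h :: "nat \<Rightarrow> nat \<Rightarrow> 'b::comm_monoid_add"
  assumes "j < n" "k < n" "j \<noteq> k"
  shows "(\<Sum>p | p permutes {..<n}. h (p j) (p k))
       = (\<Sum>p | p permutes {..<n}. h (p 0) (p 1))"
proof -
  define k' where "k' = Transposition.transpose 0 j k"
  have k': "k' < n" "k' \<noteq> 0" "Transposition.transpose 0 j k' = k"
    using assms unfolding k'_def by (auto simp: Transposition.transpose_def)
  define \<sigma> where "\<sigma> = Transposition.transpose 0 j \<circ> Transposition.transpose 1 k'"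
  have "\<sigma> permutes {..<n}"
    unfolding \<sigma>_def using assms k' by (intro permutes_compose permutes_swap_id) auto
  moreover have "\<sigma> 0 = j" "\<sigma> 1 = k"
    unfolding \<sigma>_def using k' by (simp_all add: Transposition.transpose_def)
  ultimately show ?thesis
    using sum_permutations_compose_right[of \<sigma> "{..<n}" "\<lambda>p. h (p 0) (p 1)"] by simp
qed

lemma sum_real_lessThan: "(\<Sum>i<n. real i) = real n * (real n - 1) / 2"
  by (induction n) (simp_all add: field_simps)

lemma sum_real_falling2_lessThan:
  "(\<Sum>i<n. real i * (real i - 1)) = real n * (real n - 1) * (real n - 2) / 3"
  by (induction n) (simp_all add: field_simps)

lemma sum_permutes_norm_partial_sum_sq:
  fixes g :: "nat \<Rightarrow> 'a::real_inner"
  assumes "i \<le> n"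
  shows "(\<Sum>p | p permutes {..<n}. (norm (\<Sum>j<i. g (p j)))\<^sup>2)
     = real i * (\<Sum>p | p permutes {..<n}. g (p 0) \<bullet> g (p 0))
       + real i * (real i - 1) * (\<Sum>p | p permutes {..<n}. g (p 0) \<bullet> g (p 1))"
proof -
  let ?Q = "\<lambda>j k. \<Sum>p | p permutes {..<n}. g (p j) \<bullet> g (p k)"
  have "(\<Sum>p | p permutes {..<n}. (norm (\<Sum>j<i. g (p j)))\<^sup>2)
      = (\<Sum>p | p permutes {..<n}. \<Sum>j<i. \<Sum>k<i. g (p j) \<bullet> g (p k))"
    by (simp add: power2_norm_eq_inner inner_sum_left inner_sum_right)
      (rule sum.cong[OF refl], rule sum.swap)
  also have "\<dots> = (\<Sum>j<i. \<Sum>k<i. ?Q j k)"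
    by (subst sum.swap) (simp add: sum.swap[of _ _ "{p. p permutes {..<n}}"])
  also have "\<dots> = (\<Sum>j<i. ?Q 0 0 + (real i - 1) * ?Q 0 1)"
  proof (rule sum.cong[OF refl])
    fix j assume j: "j \<in> {..<i}"
    have "(\<Sum>k<i. ?Q j k) = ?Q j j + (\<Sum>k\<in>{..<i} - {j}. ?Q j k)"
      using j by (simp add: sum.remove)
    also have "?Q j j = ?Q 0 0"
      using sum_permutes_eval_eq[of j n "\<lambda>a. g a \<bullet> g a"] j assms by simp
    also have "(\<Sum>k\<in>{..<i} - {j}. ?Q j k) = (\<Sum>k\<in>{..<i} - {j}. ?Q 0 1)"
      using j assms by (intro sum.cong refl sum_permutes_eval2_eq[of j n _ "\<lambda>a b. g a \<bullet> g b"]) auto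
    also have "\<dots> = (real i - 1) * ?Q 0 1"
      using j by (simp add: of_nat_diff)
    finally show "(\<Sum>k<i. ?Q j k) = ?Q 0 0 + (real i - 1) * ?Q 0 1" .
  qed
  also have "\<dots> = real i * ?Q 0 0 + real i * (real i - 1) * ?Q 0 1"
    by (simp add: algebra_simps)
  finally show ?thesis .
qed

text \<open>By symmetry only two correlations of a uniform permutation enter, that of a position with
  itself and that of two distinct positions; the case of the full sum, i = n, determines the latter.\<close>
lemma sum_permutes_sum_norm_partial_sums_sq:
  fixes g :: "nat \<Rightarrow> 'a::real_inner"
  shows "(\<Sum>i<n. \<Sum>p | p permutes {..<n}. (norm (\<Sum>j<i. g (p j)))\<^sup>2)
     = fact n * ((real n - 2) / 3 * (norm (\<Sum>a<n. g a))\<^sup>2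
                 + (real n + 1) / 6 * (\<Sum>a<n. (norm (g a))\<^sup>2))"
proof -
  let ?P = "{p. p permutes {..<n}}"
  define Q0 where "Q0 = (\<Sum>p\<in>?P. g (p 0) \<bullet> g (p 0))"
  define Q1 where "Q1 = (\<Sum>p\<in>?P. g (p 0) \<bullet> g (p 1))"
  have card: "card ?P = fact n"
    using card_permutations[of "{..<n}" n] by simp
  have reindex: "(\<Sum>j<n. h (p j)) = (\<Sum>a<n. h a)"
    if "p \<in> ?P" for p and h :: "nat \<Rightarrow> 'b::comm_monoid_add"
    using sum.permute[of p "{..<n}" h] that by (simp add: o_def)
  have "(\<Sum>j<n. \<Sum>p\<in>?P. g (p j) \<bullet> g (p j)) = (\<Sum>j<n. Q0)"
    unfolding Q0_def by (intro sum.cong refl sum_permutes_eval_eq) simp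
  then have "real n * Q0 = (\<Sum>j<n. \<Sum>p\<in>?P. g (p j) \<bullet> g (p j))"
    by simp
  also have "\<dots> = (\<Sum>p\<in>?P. \<Sum>a<n. (norm (g a))\<^sup>2)"
    by (subst sum.swap) (simp add: reindex[of _ "\<lambda>a. g a \<bullet> g a"] power2_norm_eq_inner)
  finally have Q0: "real n * Q0 = fact n * (\<Sum>a<n. (norm (g a))\<^sup>2)"
    by (simp add: card)
  have "real n * Q0 + real n * (real n - 1) * Q1 = (\<Sum>p\<in>?P. (norm (\<Sum>j<n. g (p j)))\<^sup>2)"
    unfolding Q0_def Q1_def using sum_permutes_norm_partial_sum_sq[of n n g] by simp
  also have "\<dots> = fact n * (norm (\<Sum>a<n. g a))\<^sup>2"
    by (simp add: reindex card)
  finally have Q1: "real n * (real n - 1) * Q1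
      = fact n * ((norm (\<Sum>a<n. g a))\<^sup>2 - (\<Sum>a<n. (norm (g a))\<^sup>2))"
    using Q0 by (simp add: algebra_simps)
  have "(\<Sum>i<n. \<Sum>p\<in>?P. (norm (\<Sum>j<i. g (p j)))\<^sup>2)
      = (\<Sum>i<n. real i * Q0 + real i * (real i - 1) * Q1)"
    unfolding Q0_def Q1_def by (intro sum.cong refl sum_permutes_norm_partial_sum_sq) simp
  also have "\<dots> = (\<Sum>i<n. real i) * Q0 + (\<Sum>i<n. real i * (real i - 1)) * Q1"
    by (simp add: sum.distrib sum_distrib_right)
  also have "\<dots> = (real n - 1) / 2 * (real n * Q0)
      + (real n - 2) / 3 * (real n * (real n - 1) * Q1)"
    unfolding sum_real_lessThan sum_real_falling2_lessThan by (simp add: field_simps)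
  finally show ?thesis
    unfolding Q0 Q1 by (simp add: field_simps)
qed

lemma rr_iter_displacement:
  "x - rr_iter G \<gamma> m p x i = \<gamma> *\<^sub>R (\<Sum>j<i. G m (p j) (rr_iter G \<gamma> m p x j))"
  by (induction i) (simp_all add: algebra_simps)

lemma norm_add_sq_le:
  fixes u w :: "'a::real_normed_vector"
  shows "(norm (u + w))\<^sup>2 \<le> 2 * (norm u)\<^sup>2 + 2 * (norm w)\<^sup>2"
proof -
  have "(norm (u + w))\<^sup>2 \<le> (norm u + norm w)\<^sup>2"
    by (simp add: norm_triangle_ineq power_mono)
  also have "\<dots> \<le> 2 * (norm u)\<^sup>2 + 2 * (norm w)\<^sup>2"
    using sum_squares_ge_zero[of "norm u - norm w" 0] by (simp add: power2_eq_square algebra_simps)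
  finally show ?thesis .
qed

lemma rr_iter_deviation_sq_le:
  fixes G :: "nat \<Rightarrow> nat \<Rightarrow> 'a::real_inner \<Rightarrow> 'a"
  assumes lipschitz: "\<And>a y z. a < n \<Longrightarrow> norm (G m a y - G m a z) \<le> L * norm (y - z)"
    and p: "p permutes {..<n}" and i: "i \<le> n" and L: "L \<ge> 0"
  shows "(norm (x - rr_iter G \<gamma> m p x i))\<^sup>2
     \<le> 2 * \<gamma>\<^sup>2 * L\<^sup>2 * real i * (\<Sum>j<i. (norm (x - rr_iter G \<gamma> m p x j))\<^sup>2)
       + 2 * \<gamma>\<^sup>2 * (norm (\<Sum>j<i. G m (p j) x))\<^sup>2"
proof -
  let ?X = "rr_iter G \<gamma> m p x"
  define u where "u = (\<Sum>j<i. G m (p j) (?X j) - G m (p j) x)"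
  define w where "w = (\<Sum>j<i. G m (p j) x)"
  have "(norm u)\<^sup>2 \<le> (\<Sum>j<i. norm (G m (p j) (?X j) - G m (p j) x))\<^sup>2"
    unfolding u_def by (simp add: norm_sum power_mono)
  also have "\<dots> \<le> real i * (\<Sum>j<i. (norm (G m (p j) (?X j) - G m (p j) x))\<^sup>2)"
    using sum_squared_le_sum_of_squares[of _ "{..<i}"] by (simp add: mult.commute)
  also have "\<dots> \<le> real i * (\<Sum>j<i. L\<^sup>2 * (norm (x - ?X j))\<^sup>2)"
  proof (intro mult_left_mono sum_mono)
    fix j assume "j \<in> {..<i}"
    then have "p j < n"
      using i permutes_in_image[OF p, of j] by auto
    then have "norm (G m (p j) (?X j) - G m (p j) x) \<le> L * norm (x - ?X j)"
      using lipschitz by (metis norm_minus_commute)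
    then show "(norm (G m (p j) (?X j) - G m (p j) x))\<^sup>2 \<le> L\<^sup>2 * (norm (x - ?X j))\<^sup>2"
      by (metis norm_ge_zero power_mono power_mult_distrib)
  qed simp
  finally have u: "(norm u)\<^sup>2 \<le> L\<^sup>2 * real i * (\<Sum>j<i. (norm (x - ?X j))\<^sup>2)"
    by (simp add: sum_distrib_left algebra_simps)
  have "x - ?X i = \<gamma> *\<^sub>R (u + w)"
    unfolding rr_iter_displacement u_def w_def by (simp add: sum_subtractf)
  then have "(norm (x - ?X i))\<^sup>2 = \<gamma>\<^sup>2 * (norm (u + w))\<^sup>2"
    by (simp add: power_mult_distrib)
  also have "\<dots> \<le> \<gamma>\<^sup>2 * (2 * (norm u)\<^sup>2 + 2 * (norm w)\<^sup>2)"
    by (intro mult_left_mono norm_add_sq_le) simp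
  also have "\<dots> \<le> \<gamma>\<^sup>2 * (2 * (L\<^sup>2 * real i * (\<Sum>j<i. (norm (x - ?X j))\<^sup>2)) + 2 * (norm w)\<^sup>2)"
    using u by (intro mult_left_mono) auto
  finally show ?thesis
    unfolding w_def by (simp add: algebra_simps)
qed

text \<open>Summing the previous bound over the epoch, the deviation terms on the right add up to at
  most the square of \<gamma> L n \<le> 1/2 times the left-hand side and can therefore be absorbed.\<close>
lemma sum_permutes_rr_iter_deviation_le:
  fixes G :: "nat \<Rightarrow> nat \<Rightarrow> 'a::real_inner \<Rightarrow> 'a"
  assumes lipschitz: "\<And>a y z. a < n \<Longrightarrow> norm (G m a y - G m a z) \<le> L * norm (y - z)"
    and L: "L \<ge> 0" and \<gamma>: "\<gamma> \<ge> 0" and step: "\<gamma> * L * real n \<le> 1 / 2"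
  shows "(\<Sum>i<n. \<Sum>p | p permutes {..<n}. (norm (x - rr_iter G \<gamma> m p x i))\<^sup>2)
     \<le> 8 / 3 * \<gamma>\<^sup>2 * (\<Sum>i<n. \<Sum>p | p permutes {..<n}. (norm (\<Sum>j<i. G m (p j) x))\<^sup>2)"
proof -
  let ?P = "{p. p permutes {..<n}}"
  define E where "E i = (\<Sum>p\<in>?P. (norm (x - rr_iter G \<gamma> m p x i))\<^sup>2)" for i
  define W where "W i = (\<Sum>p\<in>?P. (norm (\<Sum>j<i. G m (p j) x))\<^sup>2)" for i
  define S where "S = (\<Sum>i<n. E i)"
  have E_nonneg: "E i \<ge> 0" for i
    unfolding E_def by (intro sum_nonneg) simp
  have E: "E i \<le> 2 * \<gamma>\<^sup>2 * L\<^sup>2 * real i * (\<Sum>j<i. E j) + 2 * \<gamma>\<^sup>2 * W i" if "i \<le> n" for i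
  proof -
    have "E i \<le> (\<Sum>p\<in>?P. 2 * \<gamma>\<^sup>2 * L\<^sup>2 * real i * (\<Sum>j<i. (norm (x - rr_iter G \<gamma> m p x j))\<^sup>2)
                 + 2 * \<gamma>\<^sup>2 * (norm (\<Sum>j<i. G m (p j) x))\<^sup>2)"
      unfolding E_def using L that
      by (intro sum_mono rr_iter_deviation_sq_le[where G=G and m=m and n=n, OF lipschitz]) auto
    also have "\<dots> = 2 * \<gamma>\<^sup>2 * L\<^sup>2 * real i * (\<Sum>j<i. E j) + 2 * \<gamma>\<^sup>2 * W i"
      unfolding E_def W_def by (simp add: sum.distrib sum_distrib_left sum.swap[of _ ?P "{..<i}"])
    finally show ?thesis .
  qed
  have "S \<le> (\<Sum>i<n. 2 * \<gamma>\<^sup>2 * L\<^sup>2 * real i * S + 2 * \<gamma>\<^sup>2 * W i)"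
  proof (unfold S_def, intro sum_mono order.trans[OF E] add_right_mono mult_left_mono)
    show "(\<Sum>j<i. E j) \<le> (\<Sum>i<n. E i)" if "i \<in> {..<n}" for i
      using that E_nonneg by (intro sum_mono2) auto
  qed auto
  also have "\<dots> = \<gamma>\<^sup>2 * L\<^sup>2 * (real n * (real n - 1)) * S + 2 * \<gamma>\<^sup>2 * (\<Sum>i<n. W i)"
    by (simp add: sum.distrib flip: sum_distrib_left sum_distrib_right)
      (simp add: sum_real_lessThan field_simps)
  also have "\<gamma>\<^sup>2 * L\<^sup>2 * (real n * (real n - 1)) * S \<le> (\<gamma> * L * real n)\<^sup>2 * S"
  proof (intro mult_right_mono)
    have "real n * (real n - 1) \<le> (real n)\<^sup>2"
      by (simp add: power2_eq_square right_diff_distrib)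
    then show "\<gamma>\<^sup>2 * L\<^sup>2 * (real n * (real n - 1)) \<le> (\<gamma> * L * real n)\<^sup>2"
      unfolding power_mult_distrib by (intro mult_left_mono) auto
    show "S \<ge> 0"
      unfolding S_def using E_nonneg by (intro sum_nonneg) auto
  qed
  also have "(\<gamma> * L * real n)\<^sup>2 \<le> (1 / 2)\<^sup>2"
    using step L \<gamma> by (intro power_mono) auto
  finally have "S \<le> (1 / 2)\<^sup>2 * S + 2 * \<gamma>\<^sup>2 * (\<Sum>i<n. W i)"
    using E_nonneg unfolding S_def by (simp add: sum_nonneg mult_right_mono)
  then have "S \<le> 8 / 3 * \<gamma>\<^sup>2 * (\<Sum>i<n. W i)"
    by (simp add: power2_eq_square)
  then show ?thesis
    unfolding S_def E_def W_def .
qed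

lemma perm_expect_eq_sum_div_fact:
  "perm_expect n X = (\<Sum>p | p permutes {..<n}. X p) / fact n"
  unfolding perm_expect_def using card_permutations[of "{..<n}" n] by simp

lemma sum_perm_expect_rr_iter_deviation_le:
  fixes G :: "nat \<Rightarrow> nat \<Rightarrow> 'a::real_inner \<Rightarrow> 'a"
  assumes lipschitz: "\<And>a y z. a < n \<Longrightarrow> norm (G m a y - G m a z) \<le> L * norm (y - z)"
    and "L \<ge> 0" "\<gamma> \<ge> 0" "\<gamma> * L * real n \<le> 1 / 2"
  shows "(\<Sum>i<n. perm_expect n (\<lambda>p. (norm (x - rr_iter G \<gamma> m p x i))\<^sup>2))
     \<le> 8 / 3 * \<gamma>\<^sup>2 * ((real n - 2) / 3 * (norm (\<Sum>a<n. G m a x))\<^sup>2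
                     + (real n + 1) / 6 * (\<Sum>a<n. (norm (G m a x))\<^sup>2))"
  using divide_right_mono[OF sum_permutes_rr_iter_deviation_le[where G=G and m=m and n=n, OF assms,
      of x], of "fact n"]
  by (simp add: perm_expect_eq_sum_div_fact flip: sum_divide_distrib)
    (simp add: sum_permutes_sum_norm_partial_sums_sq[of "\<lambda>a. G m a x"])

lemma sum_perm_expect_rr_iter_deviation_le_suboptimality:
  fixes f :: "nat \<Rightarrow> 'a::real_inner \<Rightarrow> real" and G :: "nat \<Rightarrow> nat \<Rightarrow> 'a \<Rightarrow> 'a"
  assumes n: "n \<ge> 1" and L: "L > 0" and \<gamma>: "\<gamma> \<ge> 0" and step: "\<gamma> * L * real n \<le> 1 / 2"
    and deriv: "\<And>a y. a < n \<Longrightarrow> (f a has_derivative (\<lambda>h. G m a y \<bullet> h)) (at y)"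
    and lipschitz: "\<And>a y z. a < n \<Longrightarrow> norm (G m a y - G m a z) \<le> L * norm (y - z)"
    and bdd: "\<And>a. a < n \<Longrightarrow> bdd_below (range (f a))"
    and bdd_avg: "bdd_below (range (\<lambda>y. (\<Sum>a<n. f a y) / real n))"
  shows "(\<Sum>i<n. perm_expect n (\<lambda>p. (norm (x - rr_iter G \<gamma> m p x i))\<^sup>2))
     \<le> 2 * \<gamma>\<^sup>2 * L * real n *
         ((real n)\<^sup>2 * ((\<Sum>a<n. f a x) / real n - (INF y. (\<Sum>a<n. f a y) / real n))
          + (\<Sum>a<n. f a x - (INF y. f a y)))"
proof -
  define s where "s = (\<Sum>a<n. G m a x)"
  define B where "B = (\<Sum>a<n. f a x) / real n - (INF y. (\<Sum>a<n. f a y) / real n)"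
  define C where "C = (\<Sum>a<n. f a x - (INF y. f a y))"
  have upper: "f a (x + v) \<le> f a x + G m a x \<bullet> v + L / 2 * (norm v)\<^sup>2" if "a < n" for a v
    by (rule lipschitz_gradient_quadratic_upper_bound[OF deriv[OF that] lipschitz[OF that]])
  have avg_upper: "(\<Sum>a<n. f a (x + v)) / real n
      \<le> (\<Sum>a<n. f a x) / real n + (s /\<^sub>R real n) \<bullet> v + L / 2 * (norm v)\<^sup>2" for v
  proof -
    have "(\<Sum>a<n. f a (x + v)) \<le> (\<Sum>a<n. f a x + G m a x \<bullet> v + L / 2 * (norm v)\<^sup>2)"
      using upper by (intro sum_mono) auto
    also have "\<dots> = (\<Sum>a<n. f a x) + s \<bullet> v + real n * (L / 2 * (norm v)\<^sup>2)"
      unfolding s_def by (simp add: sum.distrib inner_sum_left)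
    finally show ?thesis
      using n by (simp add: field_simps)
  qed
  have "(norm (s /\<^sub>R real n))\<^sup>2 \<le> 2 * L * B"
    unfolding B_def using quadratic_upper_bound_imp_norm_sq_le[OF avg_upper bdd_avg L] .
  then have s: "(norm s)\<^sup>2 \<le> 2 * L * (real n)\<^sup>2 * B"
    using n by (simp add: power_divide field_simps)
  have A: "(\<Sum>a<n. (norm (G m a x))\<^sup>2) \<le> 2 * L * C"
    unfolding C_def sum_distrib_left using upper bdd L
    by (intro sum_mono quadratic_upper_bound_imp_norm_sq_le) auto
  have B_nonneg: "B \<ge> 0"
    using order.trans[OF zero_le_power2 s] mult_pos_pos[OF L, of "(real n)\<^sup>2"] n
    by (simp add: zero_le_mult_iff)
  have C_nonneg: "C \<ge> 0"
    using order.trans[OF sum_nonneg A] L by (simp add: zero_le_mult_iff)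
  show ?thesis
  proof (cases "n = 1")
    \<comment> \<open>the factor (n - 2)/3 below is negative for n = 1, but then there is no deviation at all\<close>
    case True
    then show ?thesis
      using B_nonneg C_nonneg L unfolding B_def C_def by (simp add: perm_expect_def)
  next
    case False
    with n have n2: "real n \<ge> 2" by simp
    have "(\<Sum>i<n. perm_expect n (\<lambda>p. (norm (x - rr_iter G \<gamma> m p x i))\<^sup>2))
        \<le> 8 / 3 * \<gamma>\<^sup>2 * ((real n - 2) / 3 * (norm s)\<^sup>2
                           + (real n + 1) / 6 * (\<Sum>a<n. (norm (G m a x))\<^sup>2))"
      unfolding s_def using lipschitz L \<gamma> step by (intro sum_perm_expect_rr_iter_deviation_le) auto
    also have "\<dots> \<le> 8 / 3 * \<gamma>\<^sup>2 * ((real n - 2) / 3 * (2 * L * (real n)\<^sup>2 * B)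
                               + (real n + 1) / 6 * (2 * L * C))"
      using s A n2 by (intro mult_left_mono add_mono) auto
    also have "\<dots> = \<gamma>\<^sup>2 * L * (16 / 9 * (real n - 2) * (real n)\<^sup>2 * B + 8 / 9 * (real n + 1) * C)"
      by (simp add: field_simps)
    also have "\<dots> \<le> \<gamma>\<^sup>2 * L * (2 * real n * (real n)\<^sup>2 * B + 2 * real n * C)"
      using n2 B_nonneg C_nonneg L by (intro mult_left_mono add_mono mult_right_mono) auto
    also have "\<dots> = 2 * \<gamma>\<^sup>2 * L * real n * ((real n)\<^sup>2 * B + C)"
      by (simp add: algebra_simps)
    finally show ?thesis
      unfolding B_def C_def .
  qed
qed

lemma average_perm_expect_rr_iter_deviation_le:
  fixes f :: "nat \<Rightarrow> nat \<Rightarrow> 'a::real_inner \<Rightarrow> real" and G :: "nat \<Rightarrow> nat \<Rightarrow> 'a \<Rightarrow> 'a"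
  assumes M: "M \<ge> 1" and n: "n \<ge> 1" and L: "L > 0" and \<gamma>: "\<gamma> \<ge> 0"
    and step: "\<gamma> * L * real n \<le> 1 / 2"
    and deriv: "\<And>m i y. m \<in> {1..M} \<Longrightarrow> i < n \<Longrightarrow>
                  (f m i has_derivative (\<lambda>h. G m i y \<bullet> h)) (at y)"
    and lipschitz: "\<And>m i y z. m \<in> {1..M} \<Longrightarrow> i < n \<Longrightarrow>
                  norm (G m i y - G m i z) \<le> L * norm (y - z)"
    and bdd: "\<And>m i. m \<in> {1..M} \<Longrightarrow> i < n \<Longrightarrow> bdd_below (range (f m i))"
    and bdd_avg: "\<And>m. m \<in> {1..M} \<Longrightarrow> bdd_below (range (\<lambda>y. (\<Sum>i<n. f m i y) / real n))"
  shows "(\<Sum>m=1..M. \<Sum>i<n. perm_expect n (\<lambda>p. (norm (x - rr_iter G \<gamma> m p x i))\<^sup>2))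
       / (real M * real n)
     \<le> 2 * \<gamma>\<^sup>2 * L * (\<Sum>m=1..M.
           (real n)\<^sup>2 * ((\<Sum>i<n. f m i x) / real n - (INF y. (\<Sum>i<n. f m i y) / real n))
           + (\<Sum>i<n. f m i x - (INF y. f m i y))) / real M"
proof -
  let ?T = "\<lambda>m. (real n)\<^sup>2 * ((\<Sum>i<n. f m i x) / real n - (INF y. (\<Sum>i<n. f m i y) / real n))
                  + (\<Sum>i<n. f m i x - (INF y. f m i y))"
  have "(\<Sum>m=1..M. \<Sum>i<n. perm_expect n (\<lambda>p. (norm (x - rr_iter G \<gamma> m p x i))\<^sup>2))
      \<le> (\<Sum>m=1..M. 2 * \<gamma>\<^sup>2 * L * real n * ?T m)"
    using n L \<gamma> step deriv lipschitz bdd bdd_avg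
    by (intro sum_mono sum_perm_expect_rr_iter_deviation_le_suboptimality) auto
  also have "\<dots> = real n * (2 * \<gamma>\<^sup>2 * L * (\<Sum>m=1..M. ?T m))"
    by (simp add: sum_distrib_left mult_ac)
  finally show ?thesis
    using M n by (simp add: divide_right_mono field_simps)
qed

theorem mainTheorem8:
  fixes f :: "nat \<Rightarrow> nat \<Rightarrow> 'a::euclidean_space \<Rightarrow> real"
    and G :: "nat \<Rightarrow> nat \<Rightarrow> 'a \<Rightarrow> 'a"
    and M n :: nat and L \<gamma> :: real and x :: 'a
  assumes M_pos: "M \<ge> 1" and n_pos: "n \<ge> 1"
    and L_pos: "L > 0" and \<gamma>_pos: "\<gamma> > 0"
    and \<gamma>_le: "\<gamma> \<le> 1 / (2 * L * real n)"
    and grad: "\<And>m i y. m \<in> {1..M} \<Longrightarrow> i \<in> {..<n} \<Longrightarrow>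
                 (f m i has_derivative (\<lambda>h. G m i y \<bullet> h)) (at y)"
    and smooth: "\<And>m i y z. m \<in> {1..M} \<Longrightarrow> i \<in> {..<n} \<Longrightarrow>
                 norm (G m i y - G m i z) \<le> L * norm (y - z)"
    and fin_i: "\<And>m i. m \<in> {1..M} \<Longrightarrow> i \<in> {..<n} \<Longrightarrow> bdd_below (range (f m i))"
    and fin_m: "\<And>m. m \<in> {1..M} \<Longrightarrow>
                 bdd_below (range (\<lambda>y. (\<Sum>i<n. f m i y) / real n))"
    and fin: "bdd_below (range (\<lambda>y. (\<Sum>m=1..M. (\<Sum>i<n. f m i y) / real n) / real M))"
  shows
   "(let fm = (\<lambda>m y. (\<Sum>i<n. f m i y) / real n);
         F = (\<lambda>y. (\<Sum>m=1..M. fm m y) / real M);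
         Fstar = (INF y. F y);
         fstar_m = (\<lambda>m. INF y. fm m y);
         fstar_mi = (\<lambda>m i. INF y. f m i y);
         Delta_star = Fstar - (\<Sum>m=1..M. fstar_m m) / real M;
         Delta_star_m = (\<lambda>m. Fstar - (\<Sum>i<n. fstar_mi m i) / real n)
     in (\<Sum>m=1..M. \<Sum>i<n.
            perm_expect n (\<lambda>p. (norm (x - rr_iter G \<gamma> m p x i))\<^sup>2)) / (real M * real n)
        \<le> 4 * \<gamma>\<^sup>2 * (real n)\<^sup>2 * L * (F x - Fstar)
          + 2 * \<gamma>\<^sup>2 * (real n)\<^sup>2 * L * Delta_star
          + 2 * \<gamma>\<^sup>2 * real n * L * ((\<Sum>m=1..M. Delta_star_m m) / real M))"
proof -
  define fm where "fm = (\<lambda>m y. (\<Sum>i<n. f m i y) / real n)"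
  define F where "F = (\<lambda>y. (\<Sum>m=1..M. fm m y) / real M)"
  define Fstar where "Fstar = (INF y. F y)"
  define fstar_mi where "fstar_mi = (\<lambda>m i. INF y. f m i y)"
  define K where "K = 2 * \<gamma>\<^sup>2 * L"
  have "\<gamma> * L * real n \<le> 1 / 2"
    using \<gamma>_le L_pos n_pos by (simp add: field_simps)
  then have "(\<Sum>m=1..M. \<Sum>i<n. perm_expect n (\<lambda>p. (norm (x - rr_iter G \<gamma> m p x i))\<^sup>2))
        / (real M * real n)
      \<le> K * (\<Sum>m=1..M. (real n)\<^sup>2 * (fm m x - (INF y. fm m y))
                        + (\<Sum>i<n. f m i x - fstar_mi m i)) / real M"
    unfolding K_def fm_def fstar_mi_def using M_pos n_pos L_pos \<gamma>_pos grad smooth fin_i fin_m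
    by (intro average_perm_expect_rr_iter_deviation_le) auto
  also have "\<dots> = K * (real n)\<^sup>2 * (F x - (\<Sum>m=1..M. INF y. fm m y) / real M)
      + K * real n * (F x - (\<Sum>m=1..M. (\<Sum>i<n. fstar_mi m i) / real n) / real M)"
    using M_pos n_pos unfolding F_def fm_def
    by (simp add: sum_subtractf sum.distrib sum_distrib_left sum_divide_distrib field_simps)
  also have "\<dots> \<le> 2 * K * (real n)\<^sup>2 * (F x - Fstar)
      + K * (real n)\<^sup>2 * (Fstar - (\<Sum>m=1..M. INF y. fm m y) / real M)
      + K * real n * ((\<Sum>m=1..M. Fstar - (\<Sum>i<n. fstar_mi m i) / real n) / real M)"
  proof -
    \<comment> \<open>the only slack: the gap F x - Fstar occurs with weight n^2 + n \<le> 2 n^2\<close>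
    have "Fstar \<le> F x"
      using fin unfolding Fstar_def F_def fm_def by (intro cINF_lower) auto
    then have "K * real n * (F x - Fstar) \<le> K * (real n)\<^sup>2 * (F x - Fstar)"
      using n_pos L_pos by (intro mult_right_mono mult_left_mono) (auto simp: K_def power2_eq_square)
    moreover have "(\<Sum>m=1..M. Fstar - (\<Sum>i<n. fstar_mi m i) / real n) / real M
        = Fstar - (\<Sum>m=1..M. (\<Sum>i<n. fstar_mi m i) / real n) / real M"
      using M_pos by (simp add: sum_subtractf diff_divide_distrib)
    ultimately show ?thesis
      by (simp only:) (simp add: algebra_simps)
  qed
  finally show ?thesis
    unfolding Let_def K_def Fstar_def F_def fm_def fstar_mi_def by (simp add: algebra_simps)
qed

end
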